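(* Let $G$ be a finite connected graph with minimum degree at least $2$, and let $w_0(uv)=(d(u)d(v))^{-1/2}$ for each edge $uv$. Then the weighted spectral radius of the universal cover $\widetilde{G}$ of $G$, with the lifted weight $w_0$, satisfies $$\lambda_1(\widetilde{G},w_0)\ge \frac{2\sum_{u\in V(G)}d(u)\sqrt{d(u)-1}}{\sum_{u\in V(G)}d(u)^2}.$$
   Context: $d(u)$ denotes the degree of $u$ in $G$. The universal cover $\widetilde{G}$ of a connected graph $G$ is the (possibly infinite) tree whose vertices are the non-backtracking walks $(v_0,\dots,v_i)$ in $G$ (walks with $v_j\ne v_{j+2}$ for all $j$) starting at a fixed vertex $v_0$, two walks adjacent iff one is a one-step extension of the other; the edge between $(v_0,\dots,v_{i-1})$ and $(v_0,\dots,v_i)$ receives weight $w_0(v_{i-1}v_i)$. The weighted spectral radius $\lambda_1(\widetilde{G},w_0)$ is the spectral radius of the (bounded) weighted adjacency operator of $\widetilde{G}$, whose $(x,y)$-entry is the weight of $xy$ if $xy$ is an edge and $0$ otherwise. *)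

theory Defs
  imports Complex_Main
begin

definition simple_graph :: "'a set \<Rightarrow> ('a \<Rightarrow> 'a \<Rightarrow> bool) \<Rightarrow> bool" where
  "simple_graph V E \<longleftrightarrow> finite V \<and> (\<forall>u v. E u v \<longrightarrow> u \<in> V \<and> v \<in> V)
     \<and> (\<forall>u v. E u v \<longrightarrow> E v u) \<and> (\<forall>u. \<not> E u u)"

definition connected_graph :: "'a set \<Rightarrow> ('a \<Rightarrow> 'a \<Rightarrow> bool) \<Rightarrow> bool" where
  "connected_graph V E \<longleftrightarrow> V \<noteq> {} \<and> (\<forall>u\<in>V. \<forall>v\<in>V. (u, v) \<in> {(x, y). E x y}\<^sup>*)"

definition deg :: "'a set \<Rightarrow> ('a \<Rightarrow> 'a \<Rightarrow> bool) \<Rightarrow> 'a \<Rightarrow> nat" where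
  "deg V E u = card {v \<in> V. E u v}"

definition w0 :: "'a set \<Rightarrow> ('a \<Rightarrow> 'a \<Rightarrow> bool) \<Rightarrow> 'a \<Rightarrow> 'a \<Rightarrow> real" where
  "w0 V E u v = 1 / sqrt (real (deg V E u) * real (deg V E v))"

text \<open>Vertices of the universal cover: non-backtracking walks (as nonempty lists) starting at v0.\<close>
definition ucover :: "('a \<Rightarrow> 'a \<Rightarrow> bool) \<Rightarrow> 'a \<Rightarrow> 'a list set" where
  "ucover E v0 = {xs. xs \<noteq> [] \<and> hd xs = v0
      \<and> (\<forall>i. Suc i < length xs \<longrightarrow> E (xs ! i) (xs ! Suc i))
      \<and> (\<forall>i. i + 2 < length xs \<longrightarrow> xs ! i \<noteq> xs ! (i + 2))}"

definition cover_adj :: "'a list \<Rightarrow> 'a list \<Rightarrow> bool" where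
  "cover_adj x y \<longleftrightarrow> (\<exists>v. y = x @ [v]) \<or> (\<exists>v. x = y @ [v])"

definition cover_op :: "'a set \<Rightarrow> ('a \<Rightarrow> 'a \<Rightarrow> bool) \<Rightarrow> 'a \<Rightarrow> ('a list \<Rightarrow> real) \<Rightarrow> 'a list \<Rightarrow> real" where
  "cover_op V E v0 f x = (if x \<in> ucover E v0 then
      (\<Sum>y\<in>{y \<in> ucover E v0. cover_adj x y}. w0 V E (last x) (last y) * f y) else 0)"

definition supp_fun :: "('b \<Rightarrow> real) \<Rightarrow> 'b set" where
  "supp_fun f = {x. f x \<noteq> 0}"

definition finsupp_vecs :: "'b set \<Rightarrow> ('b \<Rightarrow> real) set" where
  "finsupp_vecs C = {f. finite (supp_fun f) \<and> supp_fun f \<subseteq> C \<and> supp_fun f \<noteq> {}}"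

definition l2norm :: "('b \<Rightarrow> real) \<Rightarrow> real" where
  "l2norm f = sqrt (\<Sum>x\<in>supp_fun f. (f x)\<^sup>2)"

text \<open>Operator norm of A^k on l2, computed on the dense subspace of finitely supported vectors.\<close>
definition cover_pow_norm :: "'a set \<Rightarrow> ('a \<Rightarrow> 'a \<Rightarrow> bool) \<Rightarrow> 'a \<Rightarrow> nat \<Rightarrow> real" where
  "cover_pow_norm V E v0 k =
     (SUP f\<in>finsupp_vecs (ucover E v0). l2norm ((cover_op V E v0 ^^ k) f) / l2norm f)"

text \<open>Spectral radius via Gelfand's formula: r(A) = lim ||A^k||^(1/k) = inf_{k>=1} ||A^k||^(1/k).\<close>
definition cover_spectral_radius :: "'a set \<Rightarrow> ('a \<Rightarrow> 'a \<Rightarrow> bool) \<Rightarrow> 'a \<Rightarrow> real" where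
  "cover_spectral_radius V E v0 = (INF k\<in>{1..}. root k (cover_pow_norm V E v0 k))"

end

theory Submission
  imports Defs "HOL-Analysis.Convex"
begin

(*
  Lift each arc (a, b) of G to a vertex of the cover whose walk ends with a, b, and take as test
  vector the function on the subtree of depth n above it whose square at a continuation
  a, b, z_1, ..., z_L is d(z_L) times the probability that the non-backtracking random walk started
  on (a, b) follows z_1, ..., z_L. The uniform distribution on arcs is stationary for that walk, so
  summed over all arcs the Rayleigh numerators give 2 n sum_u d(u) sqrt(d(u) - 1) and the squared
  norms give (n + 1) sum_u d(u)^2; hence some arc has Rayleigh quotient at least n / (n + 1) times
  the bound. A finitely supported f with Rayleigh quotient r satisfies ||A^k f|| >= r^k ||f||,
  because k |-> ||A^k f|| is log-convex, and this bounds every term of the Gelfand formula.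
  Connectivity and minimum degree two ensure that every arc of G is the last arc of a
  non-backtracking walk from v0.
*)

section \<open>Non-backtracking walks\<close>

definition nonbacktracking :: "('a \<Rightarrow> 'a \<Rightarrow> bool) \<Rightarrow> 'a list \<Rightarrow> bool" where
  "nonbacktracking E xs \<longleftrightarrow> (\<forall>i. Suc i < length xs \<longrightarrow> E (xs ! i) (xs ! Suc i))
      \<and> (\<forall>i. i + 2 < length xs \<longrightarrow> xs ! i \<noteq> xs ! (i + 2))"

lemma ucover_eq: "ucover E v0 = {xs. xs \<noteq> [] \<and> hd xs = v0 \<and> nonbacktracking E xs}"
  unfolding ucover_def nonbacktracking_def by auto

lemma all_Suc_less_Suc:
  "(\<forall>i. Suc i < Suc n \<longrightarrow> P i) \<longleftrightarrow> (\<forall>i. Suc i < n \<longrightarrow> P i) \<and> (0 < n \<longrightarrow> P (n - 1))"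
  by (auto simp: less_Suc_eq)

lemma all_add2_less_Suc:
  "(\<forall>i. i + 2 < Suc n \<longrightarrow> P i) \<longleftrightarrow> (\<forall>i. i + 2 < n \<longrightarrow> P i) \<and> (2 \<le> n \<longrightarrow> P (n - 2))"
  by (auto simp: less_Suc_eq)

lemma last_butlast_conv_nth:
  assumes "2 \<le> length xs" shows "last (butlast xs) = xs ! (length xs - 2)"
proof -
  have "butlast xs \<noteq> []" using assms by (cases xs rule: rev_cases) auto
  then show ?thesis using assms by (simp add: last_conv_nth nth_butlast numeral_2_eq_2)
qed

lemma nonbacktracking_snoc:
  "nonbacktracking E (xs @ [c]) \<longleftrightarrow> nonbacktracking E xs \<and> (xs \<noteq> [] \<longrightarrow> E (last xs) c)
     \<and> (2 \<le> length xs \<longrightarrow> last (butlast xs) \<noteq> c)"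
  unfolding nonbacktracking_def length_append_singleton all_Suc_less_Suc all_add2_less_Suc
  by (auto simp: nth_append last_conv_nth last_butlast_conv_nth)

lemma nonbacktracking_Nil [simp]: "nonbacktracking E []"
  and nonbacktracking_singleton [simp]: "nonbacktracking E [a]"
  by (auto simp: nonbacktracking_def)

lemma nonbacktracking_pair [simp]: "nonbacktracking E [a, b] \<longleftrightarrow> E a b"
  using nonbacktracking_snoc[of E "[a]" b] by simp

lemma nonbacktracking_Cons_Cons_snoc:
  "nonbacktracking E (a # b # zs @ [c]) \<longleftrightarrow> nonbacktracking E (a # b # zs)
     \<and> E (last (b # zs)) c \<and> last (butlast (a # b # zs)) \<noteq> c"
  using nonbacktracking_snoc[of E "a # b # zs" c] by simp

lemma nonbacktracking_appendD: "nonbacktracking E (xs @ ys) \<Longrightarrow> nonbacktracking E xs"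
  by (induction ys rule: rev_induct) (auto simp: nonbacktracking_snoc simp flip: append_assoc)

lemma nonbacktracking_last_arc:
  assumes "nonbacktracking E xs" "2 \<le> length xs"
  shows "E (last (butlast xs)) (last xs)"
proof -
  have "butlast xs \<noteq> []" using assms(2) by (cases xs rule: rev_cases) auto
  moreover have "xs = butlast xs @ [last xs]"
    using assms(2) by (intro append_butlast_last_id[symmetric]) auto
  ultimately show ?thesis using assms(1) nonbacktracking_snoc[of E "butlast xs" "last xs"] by simp
qed

lemma nonbacktracking_append_iff:
  assumes "2 \<le> length xs" "last (butlast xs) = a" "last xs = b"
  shows "nonbacktracking E (xs @ ys) \<longleftrightarrow> nonbacktracking E xs \<and> nonbacktracking E (a # b # ys)"
proof (induction ys rule: rev_induct)
  case Nil
  then show ?case using nonbacktracking_last_arc[of E xs] assms by auto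
next
  case (snoc c ys)
  have "last (xs @ ys) = last (b # ys)" using assms by (cases "ys = []") auto
  moreover have "last (butlast (xs @ ys)) = last (butlast (a # b # ys))"
    using assms by (cases "ys = []") (auto simp: butlast_append)
  moreover have "xs @ ys \<noteq> []" "2 \<le> length (xs @ ys)" using assms(1) by auto
  ultimately show ?case
    using snoc.IH nonbacktracking_snoc[of E "xs @ ys" c] nonbacktracking_Cons_Cons_snoc[of E a b ys c]
    by auto
qed

lemma nonbacktracking_set_subset:
  assumes edges: "\<And>u v. E u v \<Longrightarrow> u \<in> V \<and> v \<in> V"
    and "nonbacktracking E xs" "2 \<le> length xs"
  shows "set xs \<subseteq> V"
proof
  fix z assume "z \<in> set xs"
  then obtain i where i: "i < length xs" "z = xs ! i" by (auto simp: in_set_conv_nth)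
  show "z \<in> V"
  proof (cases "Suc i < length xs")
    case True
    then show ?thesis using assms(2) edges i by (auto simp: nonbacktracking_def)
  next
    case False
    then have "Suc (i - 1) < length xs" "Suc (i - 1) = i" using i assms(3) by auto
    then show ?thesis using assms(2) edges i unfolding nonbacktracking_def by metis
  qed
qed

lemma cover_adj_commute: "cover_adj x y = cover_adj y x"
  by (auto simp: cover_adj_def)

lemma cover_adj_iff: "x \<noteq> [] \<Longrightarrow> cover_adj x y \<longleftrightarrow> (\<exists>c. y = x @ [c]) \<or> y = butlast x"
  by (auto simp: cover_adj_def) (metis append_butlast_last_id)

section \<open>Square sums and log-convex sequences\<close>

lemma l2norm_eq_sum:
  assumes "finite S" "supp_fun f \<subseteq> S"
  shows "l2norm f = sqrt (\<Sum>x\<in>S. (f x)\<^sup>2)"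
  unfolding l2norm_def using assms
  by (intro arg_cong[where f=sqrt] sum.mono_neutral_left) (auto simp: supp_fun_def)

lemma l2norm_nonneg [simp]: "0 \<le> l2norm f"
  by (simp add: l2norm_def sum_nonneg)

lemma l2norm_sq: "(l2norm f)\<^sup>2 = (\<Sum>x\<in>supp_fun f. (f x)\<^sup>2)"
  by (simp add: l2norm_def sum_nonneg)

lemma l2norm_sq_eq_sum:
  assumes "finite S" "supp_fun f \<subseteq> S"
  shows "(l2norm f)\<^sup>2 = (\<Sum>x\<in>S. (f x)\<^sup>2)"
  using l2norm_eq_sum[OF assms] by (simp add: sum_nonneg)

lemma l2norm_pos:
  assumes "finite (supp_fun f)" "supp_fun f \<noteq> {}"
  shows "0 < l2norm f"
proof -
  obtain x where "x \<in> supp_fun f" using assms(2) by blast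
  then have "0 < (\<Sum>x\<in>supp_fun f. (f x)\<^sup>2)"
    using assms(1) by (intro sum_pos2[where i=x]) (auto simp: supp_fun_def)
  then show ?thesis by (simp add: l2norm_def)
qed

lemma sum_mult_le_sqrt_sum_squares:
  fixes f g :: "'b \<Rightarrow> real"
  shows "(\<Sum>x\<in>S. f x * g x) \<le> sqrt (\<Sum>x\<in>S. (f x)\<^sup>2) * sqrt (\<Sum>x\<in>S. (g x)\<^sup>2)"
proof -
  have "(\<Sum>x\<in>S. f x * g x)\<^sup>2 \<le> (\<Sum>x\<in>S. (f x)\<^sup>2) * (\<Sum>x\<in>S. (g x)\<^sup>2)"
    by (rule Cauchy_Schwarz_ineq_sum)
  then have "\<bar>\<Sum>x\<in>S. f x * g x\<bar> \<le> sqrt ((\<Sum>x\<in>S. (f x)\<^sup>2) * (\<Sum>x\<in>S. (g x)\<^sup>2))"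
    using real_le_rsqrt by (metis real_sqrt_abs real_sqrt_le_mono)
  then show ?thesis by (simp add: real_sqrt_mult)
qed

lemma log_convex_ratio_pow_le:
  fixes e :: "nat \<Rightarrow> real"
  assumes nonneg: "\<And>j. 0 \<le> e j" and pos: "0 < e 0"
    and log_convex: "\<And>j. (e (Suc j))\<^sup>2 \<le> e j * e (Suc (Suc j))"
  shows "(e 1 / e 0) ^ k \<le> e k / e 0"
proof -
  have step: "e 1 * e j \<le> e 0 * e (Suc j)" for j
  proof (induction j)
    case (Suc j)
    show ?case
    proof (cases "e j = 0")
      case True
      then have "e (Suc j) = 0" using log_convex[of j] by simp
      then show ?thesis using nonneg by simp
    next
      case False
      then have "0 < e j" using nonneg[of j] by simp
      have "e j * (e 1 * e (Suc j)) \<le> (e 0 * e (Suc j)) * e (Suc j)"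
        using mult_right_mono[OF Suc.IH nonneg[of "Suc j"]] by (simp add: ac_simps)
      also have "\<dots> \<le> e 0 * (e j * e (Suc (Suc j)))"
        using log_convex[of j] nonneg by (simp add: power2_eq_square mult.assoc mult_left_mono)
      finally show ?thesis using \<open>0 < e j\<close> by (simp add: mult.left_commute)
    qed
  qed simp
  show ?thesis
  proof (induction k)
    case (Suc k)
    have "(e 1 / e 0) ^ Suc k = e 1 / e 0 * (e 1 / e 0) ^ k" by simp
    also have "\<dots> \<le> e 1 / e 0 * (e k / e 0)"
      using Suc.IH nonneg pos by (intro mult_left_mono) auto
    also have "\<dots> = e 1 * e k / (e 0 * e 0)" by simp
    also have "\<dots> \<le> e 0 * e (Suc k) / (e 0 * e 0)"
      by (intro divide_right_mono step) simp
    finally show ?case using pos by simp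
  qed (use pos in simp)
qed

section \<open>The weighted adjacency operator of the universal cover\<close>

lemma w0_commute: "w0 V E u v = w0 V E v u"
  by (simp add: w0_def mult.commute)

lemma w0_nonneg: "0 \<le> w0 V E u v"
  by (simp add: w0_def)

lemma w0_le_1: "w0 V E u v \<le> 1"
proof (cases "deg V E u * deg V E v = 0")
  case False
  then have "real 1 \<le> real (deg V E u * deg V E v)" by (simp only: of_nat_le_iff)
  then show ?thesis by (simp add: w0_def)
qed (auto simp: w0_def)

locale finite_simple_graph =
  fixes V :: "'a set" and E :: "'a \<Rightarrow> 'a \<Rightarrow> bool"
  assumes simple: "simple_graph V E"
begin

lemma finite_V: "finite V"
  using simple by (simp add: simple_graph_def)

lemma edge_in_V: "E u v \<Longrightarrow> u \<in> V \<and> v \<in> V"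
  using simple by (simp add: simple_graph_def)

lemma edge_sym: "E u v \<Longrightarrow> E v u"
  using simple by (simp add: simple_graph_def)

end

locale universal_cover = finite_simple_graph +
  fixes v0 :: 'a
  assumes root: "v0 \<in> V"
begin

abbreviation "walks \<equiv> ucover E v0"
abbreviation "A \<equiv> cover_op V E v0"
abbreviation "w \<equiv> w0 V E"

lemma snoc_in_walks_iff:
  "x \<in> walks \<Longrightarrow> x @ [c] \<in> walks \<longleftrightarrow> E (last x) c \<and> (2 \<le> length x \<longrightarrow> last (butlast x) \<noteq> c)"
  by (auto simp: ucover_eq nonbacktracking_snoc)

lemma butlast_in_walks:
  assumes "x \<in> walks" "2 \<le> length x"
  shows "butlast x \<in> walks"
proof -
  obtain y c where x: "x = y @ [c]" using assms(2) by (cases x rule: rev_cases) auto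
  then have "y \<noteq> []" using assms(2) by auto
  then show ?thesis using assms(1) x nonbacktracking_appendD[of E y "[c]"] by (auto simp: ucover_eq)
qed

lemma set_walk_subset:
  assumes "y \<in> walks" shows "set y \<subseteq> V"
proof (cases "2 \<le> length y")
  case True
  then show ?thesis using assms edge_in_V nonbacktracking_set_subset[of E V y] by (simp add: ucover_eq)
next
  case False
  then have "y = [v0]" using assms by (cases y; cases "tl y") (auto simp: ucover_eq)
  then show ?thesis using root by simp
qed

definition cover_nbrs :: "'a list \<Rightarrow> 'a list set" where
  "cover_nbrs x = {y \<in> walks. cover_adj x y}"

lemma cover_nbrs_subset: "cover_nbrs x \<subseteq> insert (butlast x) ((\<lambda>v. x @ [v]) ` V)"
proof
  fix y assume y: "y \<in> cover_nbrs x"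
  show "y \<in> insert (butlast x) ((\<lambda>v. x @ [v]) ` V)"
  proof (cases "\<exists>v. y = x @ [v]")
    case True
    then obtain v where v: "y = x @ [v]" by blast
    moreover have "v \<in> V" using y v set_walk_subset[of y] by (auto simp: cover_nbrs_def)
    ultimately show ?thesis by auto
  next
    case False
    then show ?thesis using y by (auto simp: cover_nbrs_def cover_adj_def)
  qed
qed

lemma finite_cover_nbrs: "finite (cover_nbrs x)"
  using cover_nbrs_subset finite_V by (meson finite_imageI finite_insert finite_subset)

lemma card_cover_nbrs_le: "card (cover_nbrs x) \<le> card V + 1"
proof -
  have "card (cover_nbrs x) \<le> card (insert (butlast x) ((\<lambda>v. x @ [v]) ` V))"
    using cover_nbrs_subset finite_V by (intro card_mono) auto
  also have "\<dots> \<le> card V + 1"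
    using card_image_le[OF finite_V, of "\<lambda>v. x @ [v]"] finite_V by (simp add: card_insert_if)
  finally show ?thesis .
qed

lemma cover_op_eq:
  "A f x = (if x \<in> walks then \<Sum>y\<in>cover_nbrs x. w (last x) (last y) * f y else 0)"
  by (simp add: cover_op_def cover_nbrs_def)

lemma cover_op_children_parent:
  assumes x: "x \<in> walks" "2 \<le> length x"
  shows "A f x = (\<Sum>c\<in>{c. x @ [c] \<in> walks}. w (last x) c * f (x @ [c]))
    + w (last x) (last (butlast x)) * f (butlast x)"
proof -
  let ?children = "(\<lambda>c. x @ [c]) ` {c. x @ [c] \<in> walks}"
  have "x \<noteq> []" using x(2) by auto
  then have nbrs: "cover_nbrs x = insert (butlast x) ?children"
    using butlast_in_walks[OF x] by (auto simp: cover_nbrs_def cover_adj_iff)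
  have "{c. x @ [c] \<in> walks} \<subseteq> V" using set_walk_subset by fastforce
  then have "finite {c. x @ [c] \<in> walks}" using finite_V by (rule finite_subset)
  moreover have "butlast x \<notin> ?children" by (auto dest: arg_cong[of _ _ length])
  ultimately have "A f x = w (last x) (last (butlast x)) * f (butlast x)
      + (\<Sum>y\<in>?children. w (last x) (last y) * f y)"
    using x(1) by (simp add: cover_op_eq nbrs)
  also have "(\<Sum>y\<in>?children. w (last x) (last y) * f y)
      = (\<Sum>c\<in>{c. x @ [c] \<in> walks}. w (last x) c * f (x @ [c]))"
    by (subst sum.reindex) (auto simp: inj_on_def)
  finally show ?thesis by simp
qed

lemma sum_cover_nbrs:
  assumes "finite S" "S \<subseteq> walks" "\<And>y. y \<notin> S \<Longrightarrow> h y = 0"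
  shows "(\<Sum>y\<in>cover_nbrs x. h y) = (\<Sum>y\<in>S. if cover_adj x y then h y else 0)"
proof -
  have "(\<Sum>y\<in>cover_nbrs x. h y) = (\<Sum>y\<in>cover_nbrs x \<inter> S. h y)"
    using assms finite_cover_nbrs by (intro sum.mono_neutral_right) auto
  also have "cover_nbrs x \<inter> S = {y \<in> S. cover_adj x y}"
    using assms(2) by (auto simp: cover_nbrs_def)
  finally show ?thesis using assms(1) by (simp add: sum.inter_filter)
qed

lemma supp_cover_op: "supp_fun (A f) \<subseteq> walks \<inter> (\<Union>y\<in>supp_fun f. cover_nbrs y)"
proof
  fix x assume "x \<in> supp_fun (A f)"
  then have nz: "A f x \<noteq> 0" by (simp add: supp_fun_def)
  then have x: "x \<in> walks" by (cases "x \<in> walks") (simp_all add: cover_op_eq)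
  then obtain y where "y \<in> cover_nbrs x" "w (last x) (last y) * f y \<noteq> 0"
    using nz by (auto simp: cover_op_eq elim: sum.not_neutral_contains_not_neutral)
  then show "x \<in> walks \<inter> (\<Union>y\<in>supp_fun f. cover_nbrs y)"
    using x by (auto simp: supp_fun_def cover_nbrs_def cover_adj_commute)
qed

definition finsupp :: "('a list \<Rightarrow> real) \<Rightarrow> bool" where
  "finsupp f \<longleftrightarrow> finite (supp_fun f) \<and> supp_fun f \<subseteq> walks"

lemma finsupp_cover_op:
  assumes "finsupp f" shows "finsupp (A f)"
proof -
  have "finite (\<Union>y\<in>supp_fun f. cover_nbrs y)"
    using assms finite_cover_nbrs by (simp add: finsupp_def)
  then show ?thesis using supp_cover_op[of f] by (auto simp: finsupp_def intro: finite_subset)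
qed

lemma finsupp_cover_op_pow: "finsupp f \<Longrightarrow> finsupp ((A ^^ k) f)"
  by (induction k) (auto intro: finsupp_cover_op)

lemma cover_op_eq_sum:
  assumes S: "finite S" "S \<subseteq> walks" and g: "supp_fun g \<subseteq> S" and x: "x \<in> walks"
  shows "A g x = (\<Sum>y\<in>S. if cover_adj x y then w (last x) (last y) * g y else 0)"
proof -
  have "\<And>y. y \<notin> S \<Longrightarrow> w (last x) (last y) * g y = 0" using g by (auto simp: supp_fun_def)
  then show ?thesis
    using x sum_cover_nbrs[OF S, where h="\<lambda>y. w (last x) (last y) * g y"] by (simp add: cover_op_eq)
qed

lemma cover_op_symmetric:
  assumes S: "finite S" "S \<subseteq> walks" and f: "supp_fun f \<subseteq> S" and g: "supp_fun g \<subseteq> S"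
  shows "(\<Sum>x\<in>S. f x * A g x) = (\<Sum>x\<in>S. A f x * g x)"
proof -
  have "(\<Sum>x\<in>S. f x * A g x)
      = (\<Sum>x\<in>S. \<Sum>y\<in>S. if cover_adj x y then w (last x) (last y) * f x * g y else 0)"
    using cover_op_eq_sum[OF S g] subsetD[OF S(2)] by (auto simp: sum_distrib_left intro!: sum.cong)
  also have "\<dots> = (\<Sum>y\<in>S. \<Sum>x\<in>S. if cover_adj x y then w (last x) (last y) * f x * g y else 0)"
    by (rule sum.swap)
  also have "\<dots> = (\<Sum>y\<in>S. A f y * g y)"
    using cover_op_eq_sum[OF S f] subsetD[OF S(2)]
    by (auto simp: sum_distrib_right cover_adj_commute w0_commute intro!: sum.cong)
  finally show ?thesis .
qed

lemma norm_cover_op_sq_le: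
  assumes "finsupp g"
  shows "(l2norm (A g))\<^sup>2 \<le> l2norm g * l2norm (A (A g))"
proof -
  define S where "S = supp_fun g \<union> supp_fun (A g) \<union> supp_fun (A (A g))"
  have S: "finite S" "S \<subseteq> walks"
    using assms finsupp_cover_op by (auto simp: S_def finsupp_def)
  have supp: "supp_fun g \<subseteq> S" "supp_fun (A g) \<subseteq> S" "supp_fun (A (A g)) \<subseteq> S"
    by (auto simp: S_def)
  have "(l2norm (A g))\<^sup>2 = (\<Sum>x\<in>S. A g x * A g x)"
    using l2norm_sq_eq_sum[OF S(1) supp(2)] by (simp add: power2_eq_square)
  also have "\<dots> = (\<Sum>x\<in>S. g x * A (A g) x)"
    using S supp by (intro cover_op_symmetric[symmetric])
  also have "\<dots> \<le> l2norm g * l2norm (A (A g))"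
    using sum_mult_le_sqrt_sum_squares[of g "A (A g)" S] l2norm_eq_sum[OF S(1)] supp by simp
  finally show ?thesis .
qed

lemma inner_cover_op_le_norms:
  assumes "finsupp f"
  shows "(\<Sum>x\<in>supp_fun f. f x * A f x) \<le> l2norm f * l2norm (A f)"
proof -
  define S where "S = supp_fun f \<union> supp_fun (A f)"
  have S: "finite S" using assms finsupp_cover_op by (simp add: S_def finsupp_def)
  have "(\<Sum>x\<in>supp_fun f. f x * A f x) = (\<Sum>x\<in>S. f x * A f x)"
    using S by (intro sum.mono_neutral_left) (auto simp: S_def supp_fun_def)
  also have "\<dots> \<le> l2norm f * l2norm (A f)"
    using sum_mult_le_sqrt_sum_squares[of f "A f" S] l2norm_eq_sum[OF S] by (simp add: S_def)
  finally show ?thesis .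
qed

text \<open>Log-convexity of k \<mapsto> l2norm ((A ^^ k) f) turns a Rayleigh quotient r into growth r ^ k.\<close>
lemma cover_op_pow_norm_ge:
  assumes f: "finsupp f" "supp_fun f \<noteq> {}" and r: "0 \<le> r"
    and Rayleigh: "r * (\<Sum>x\<in>supp_fun f. (f x)\<^sup>2) \<le> (\<Sum>x\<in>supp_fun f. f x * A f x)"
  shows "r ^ k * l2norm f \<le> l2norm ((A ^^ k) f)"
proof -
  define n where "n j = l2norm ((A ^^ j) f)" for j
  have n_pos: "0 < n 0" using f l2norm_pos[of f] by (simp add: n_def finsupp_def)
  have "r * (n 0)\<^sup>2 \<le> n 0 * n 1"
    using Rayleigh inner_cover_op_le_norms[OF f(1)] by (simp add: n_def l2norm_sq)
  then have "r \<le> n 1 / n 0" using n_pos by (simp add: power2_eq_square field_simps)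
  then have "r ^ k \<le> (n 1 / n 0) ^ k" using r by (intro power_mono) auto
  also have "\<dots> \<le> n k / n 0"
    using norm_cover_op_sq_le[OF finsupp_cover_op_pow[OF f(1)]] n_pos
    by (intro log_convex_ratio_pow_le) (auto simp: n_def)
  finally show ?thesis using n_pos by (simp add: n_def field_simps)
qed

lemma cover_op_sq_le: "(A g x)\<^sup>2 \<le> real (card V + 1) * (\<Sum>y\<in>cover_nbrs x. (g y)\<^sup>2)"
proof (cases "x \<in> walks")
  case True
  have "(A g x)\<^sup>2 \<le> (\<Sum>y\<in>cover_nbrs x. (w (last x) (last y) * g y)\<^sup>2) * card (cover_nbrs x)"
    using True sum_squared_le_sum_of_squares by (simp add: cover_op_eq)
  also have "\<dots> \<le> (\<Sum>y\<in>cover_nbrs x. (g y)\<^sup>2) * real (card V + 1)"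
  proof (intro mult_mono sum_mono)
    fix y
    have "(w (last x) (last y))\<^sup>2 \<le> 1" by (intro power_le_one w0_nonneg w0_le_1)
    then show "(w (last x) (last y) * g y)\<^sup>2 \<le> (g y)\<^sup>2"
      by (simp add: power_mult_distrib mult_left_le_one_le)
    show "real (card (cover_nbrs x)) \<le> real (card V + 1)"
      using card_cover_nbrs_le[of x] by (simp only: of_nat_le_iff)
  qed (auto simp: sum_nonneg)
  finally show ?thesis by (simp add: mult.commute)
qed (simp add: cover_op_eq sum_nonneg)

lemma card_cover_adj_le:
  assumes "T \<subseteq> walks" shows "card {x \<in> T. cover_adj x y} \<le> card V + 1"
proof -
  have "{x \<in> T. cover_adj x y} \<subseteq> cover_nbrs y"
    using assms by (auto simp: cover_nbrs_def cover_adj_commute)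
  then show ?thesis by (meson card_mono[OF finite_cover_nbrs] card_cover_nbrs_le le_trans)
qed

text \<open>Schur test, using that a walk has at most card V + 1 neighbours in the cover. The bound only
  serves to make the supremum defining cover_pow_norm a supremum of a bounded set.\<close>
lemma norm_cover_op_le:
  assumes "finsupp g"
  shows "l2norm (A g) \<le> real (card V + 1) * l2norm g"
proof -
  define K where "K = real (card V + 1)"
  define S where "S = supp_fun g"
  define T where "T = supp_fun (A g)"
  have S: "finite S" "S \<subseteq> walks" and T: "finite T" "T \<subseteq> walks"
    using assms finsupp_cover_op by (auto simp: S_def T_def finsupp_def)
  have "(\<Sum>x\<in>T. (A g x)\<^sup>2) \<le> (\<Sum>x\<in>T. K * (\<Sum>y\<in>S. if cover_adj x y then (g y)\<^sup>2 else 0))"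
  proof (rule sum_mono)
    fix x
    have "(\<Sum>y\<in>cover_nbrs x. (g y)\<^sup>2) = (\<Sum>y\<in>S. if cover_adj x y then (g y)\<^sup>2 else 0)"
      using sum_cover_nbrs[OF S, where h="\<lambda>y. (g y)\<^sup>2" and x=x] by (simp add: S_def supp_fun_def)
    then show "(A g x)\<^sup>2 \<le> K * (\<Sum>y\<in>S. if cover_adj x y then (g y)\<^sup>2 else 0)"
      using cover_op_sq_le[of g x] by (simp add: K_def)
  qed
  also have "\<dots> = K * (\<Sum>y\<in>S. \<Sum>x\<in>T. if cover_adj x y then (g y)\<^sup>2 else 0)"
    by (simp only: sum_distrib_left) (rule sum.swap)
  also have "\<dots> = K * (\<Sum>y\<in>S. (g y)\<^sup>2 * card {x \<in> T. cover_adj x y})"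
    using T(1) by (simp add: sum.inter_filter[symmetric] mult.commute)
  also have "\<dots> \<le> K * (\<Sum>y\<in>S. (g y)\<^sup>2 * K)"
  proof -
    have "real (card {x \<in> T. cover_adj x y}) \<le> K" for y
      unfolding K_def of_nat_le_iff by (rule card_cover_adj_le[OF T(2)])
    then show ?thesis by (intro mult_left_mono sum_mono) (auto simp: K_def)
  qed
  also have "\<dots> = K\<^sup>2 * (\<Sum>y\<in>S. (g y)\<^sup>2)"
    by (simp add: power2_eq_square sum_distrib_left sum_distrib_right mult_ac)
  finally have "(l2norm (A g))\<^sup>2 \<le> (K * l2norm g)\<^sup>2"
    by (simp add: l2norm_sq power_mult_distrib S_def T_def)
  then have "l2norm (A g) \<le> K * l2norm g" by (rule power2_le_imp_le) (simp add: K_def)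
  then show ?thesis by (simp add: K_def)
qed

lemma cover_op_pow_norm_le:
  "finsupp g \<Longrightarrow> l2norm ((A ^^ k) g) \<le> real (card V + 1) ^ k * l2norm g"
proof (induction k)
  case (Suc k)
  have "l2norm ((A ^^ Suc k) g) \<le> real (card V + 1) * l2norm ((A ^^ k) g)"
    using norm_cover_op_le finsupp_cover_op_pow[OF Suc.prems] by simp
  also have "\<dots> \<le> real (card V + 1) * (real (card V + 1) ^ k * l2norm g)"
    using Suc by (intro mult_left_mono) auto
  finally show ?case by (simp only: power_Suc mult.assoc)
qed simp

lemma cover_op_ratio_le_pow_norm:
  assumes "f \<in> finsupp_vecs walks"
  shows "l2norm ((A ^^ k) f) / l2norm f \<le> cover_pow_norm V E v0 k"
  unfolding cover_pow_norm_def
proof (rule cSUP_upper[OF assms], rule bdd_aboveI2)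
  fix g assume "g \<in> finsupp_vecs walks"
  then have "finsupp g" "0 < l2norm g"
    using l2norm_pos by (auto simp: finsupp_vecs_def finsupp_def)
  then show "l2norm ((A ^^ k) g) / l2norm g \<le> real (card V + 1) ^ k"
    using cover_op_pow_norm_le by (simp add: divide_le_eq)
qed

lemma cover_spectral_radius_ge:
  assumes f: "f \<in> finsupp_vecs walks" and r: "0 \<le> r"
    and Rayleigh: "r * (\<Sum>x\<in>supp_fun f. (f x)\<^sup>2) \<le> (\<Sum>x\<in>supp_fun f. f x * A f x)"
  shows "r \<le> cover_spectral_radius V E v0"
  unfolding cover_spectral_radius_def
proof (rule cINF_greatest)
  fix k :: nat assume "k \<in> {1..}"
  have f': "finsupp f" "supp_fun f \<noteq> {}" "0 < l2norm f"
    using f l2norm_pos by (auto simp: finsupp_vecs_def finsupp_def)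
  then have "r ^ k \<le> l2norm ((A ^^ k) f) / l2norm f"
    using cover_op_pow_norm_ge[OF f'(1,2) r Rayleigh] by (simp add: le_divide_eq)
  also have "\<dots> \<le> cover_pow_norm V E v0 k" using cover_op_ratio_le_pow_norm[OF f] .
  finally have "r ^ k \<le> cover_pow_norm V E v0 k" .
  moreover have "0 < k" using \<open>k \<in> {1..}\<close> by simp
  ultimately show "r \<le> root k (cover_pow_norm V E v0 k)"
    using r real_root_le_iff real_root_power_cancel by metis
qed simp

end

section \<open>The non-backtracking random walk on arcs\<close>

lemma prod_list_map_pos:
  fixes f :: "'b \<Rightarrow> real"
  shows "(\<And>x. x \<in> set xs \<Longrightarrow> 0 < f x) \<Longrightarrow> 0 < (\<Prod>x\<leftarrow>xs. f x)"
  by (induction xs) auto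

locale min_degree_two = finite_simple_graph +
  assumes min_deg: "u \<in> V \<Longrightarrow> 2 \<le> deg V E u"
begin

abbreviation "d \<equiv> deg V E"

lemma card_nbrs_remove:
  assumes "E b c"
  shows "card ({a \<in> V. E b a} - {c}) = d b - 1"
  using assms finite_V edge_in_V by (simp add: deg_def)

definition arcs :: "('a \<times> 'a) set" where
  "arcs = {(a, b). E a b}"

lemma arcs_eq_Sigma: "arcs = (SIGMA a:V. {b \<in> V. E a b})"
  using edge_in_V by (auto simp: arcs_def)

lemma finite_arcs: "finite arcs"
  unfolding arcs_eq_Sigma using finite_V by auto

lemma sum_arcs: "(\<Sum>(a, b)\<in>arcs. f a b) = (\<Sum>a\<in>V. \<Sum>b\<in>V. if E a b then f a b else 0)"
  unfolding arcs_eq_Sigma using finite_V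
  by (subst sum.Sigma[symmetric]) (auto simp: sum.inter_filter)

lemma sum_arcs_snd: "(\<Sum>(a, b)\<in>arcs. g b) = (\<Sum>b\<in>V. real (d b) * g b)"
proof -
  have "(\<Sum>(a, b)\<in>arcs. g b) = (\<Sum>b\<in>V. \<Sum>a\<in>V. if E a b then g b else 0)"
    unfolding sum_arcs by (rule sum.swap)
  also have "\<dots> = (\<Sum>b\<in>V. real (d b) * g b)"
  proof (rule sum.cong[OF refl])
    fix b
    have "{a \<in> V. E a b} = {a \<in> V. E b a}" using edge_sym by blast
    then show "(\<Sum>a\<in>V. if E a b then g b else 0) = real (d b) * g b"
      using finite_V by (simp add: sum.inter_filter[symmetric] deg_def)
  qed
  finally show ?thesis .
qed

text \<open>Transition operator of the non-backtracking random walk on arcs.\<close>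
definition nb_transfer :: "('a \<Rightarrow> 'a \<Rightarrow> real) \<Rightarrow> 'a \<Rightarrow> 'a \<Rightarrow> real" where
  "nb_transfer h a b = (\<Sum>c\<in>V. if E b c \<and> c \<noteq> a then h b c / (real (d b) - 1) else 0)"

text \<open>The uniform distribution on arcs is stationary for the non-backtracking random walk.\<close>
lemma sum_arcs_nb_transfer: "(\<Sum>(a, b)\<in>arcs. nb_transfer h a b) = (\<Sum>(a, b)\<in>arcs. h a b)"
proof -
  have "(\<Sum>(a, b)\<in>arcs. nb_transfer h a b)
      = (\<Sum>a\<in>V. \<Sum>b\<in>V. \<Sum>c\<in>V. if E a b \<and> E b c \<and> c \<noteq> a then h b c / (real (d b) - 1) else 0)"
    unfolding sum_arcs nb_transfer_def by (auto intro!: sum.cong)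
  also have "\<dots> = (\<Sum>b\<in>V. \<Sum>a\<in>V. \<Sum>c\<in>V.
      if E a b \<and> E b c \<and> c \<noteq> a then h b c / (real (d b) - 1) else 0)"
    by (rule sum.swap)
  also have "\<dots> = (\<Sum>b\<in>V. \<Sum>c\<in>V. \<Sum>a\<in>V.
      if E a b \<and> E b c \<and> c \<noteq> a then h b c / (real (d b) - 1) else 0)"
    by (rule sum.cong[OF refl], rule sum.swap)
  also have "\<dots> = (\<Sum>b\<in>V. \<Sum>c\<in>V. if E b c then h b c else 0)"
  proof (intro sum.cong refl)
    fix b c assume "b \<in> V"
    show "(\<Sum>a\<in>V. if E a b \<and> E b c \<and> c \<noteq> a then h b c / (real (d b) - 1) else 0)
        = (if E b c then h b c else 0)"
    proof (cases "E b c")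
      case True
      have "{a \<in> V. E a b \<and> E b c \<and> c \<noteq> a} = {a \<in> V. E b a} - {c}"
        using True edge_sym by blast
      then have "(\<Sum>a\<in>V. if E a b \<and> E b c \<and> c \<noteq> a then h b c / (real (d b) - 1) else 0)
          = real (d b - 1) * (h b c / (real (d b) - 1))"
        using finite_V card_nbrs_remove[OF True] by (simp add: sum.inter_filter[symmetric])
      also have "\<dots> = h b c" using min_deg[OF \<open>b \<in> V\<close>] by (simp add: of_nat_diff)
      finally show ?thesis using True by simp
    qed simp
  qed
  also have "\<dots> = (\<Sum>(a, b)\<in>arcs. h a b)" unfolding sum_arcs ..
  finally show ?thesis .
qed

definition continuations :: "'a \<Rightarrow> 'a \<Rightarrow> nat \<Rightarrow> 'a list set" where
  "continuations a b L = {zs. length zs = L \<and> nonbacktracking E (a # b # zs)}"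

definition extensions :: "'a \<Rightarrow> 'a \<Rightarrow> 'a list \<Rightarrow> 'a set" where
  "extensions a b zs = {c \<in> V. E (last (b # zs)) c \<and> c \<noteq> last (butlast (a # b # zs))}"

text \<open>The probability that the non-backtracking random walk started on the arc (a, b) follows zs.\<close>
definition path_weight :: "'a \<Rightarrow> 'a list \<Rightarrow> real" where
  "path_weight b zs = (\<Prod>v\<leftarrow>butlast (b # zs). 1 / (real (d v) - 1))"

text \<open>Expected value of h on the L-th arc after (a, b) of that walk.\<close>
definition nb_mean :: "'a \<Rightarrow> 'a \<Rightarrow> nat \<Rightarrow> ('a \<Rightarrow> 'a \<Rightarrow> real) \<Rightarrow> real" where
  "nb_mean a b L h =
     (\<Sum>zs\<in>continuations a b L. path_weight b zs * h (last (butlast (a # b # zs))) (last (b # zs)))"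

lemma set_continuation: "zs \<in> continuations a b L \<Longrightarrow> set (a # b # zs) \<subseteq> V"
  using nonbacktracking_set_subset[OF edge_in_V, where xs="a # b # zs"] by (simp add: continuations_def)

lemma finite_continuations: "finite (continuations a b L)"
proof -
  have "continuations a b L \<subseteq> {zs. set zs \<subseteq> V \<and> length zs \<le> L}"
    using set_continuation by (auto simp: continuations_def)
  then show ?thesis using finite_lists_length_le[OF finite_V] by (rule finite_subset)
qed

lemma continuations_0: "E a b \<Longrightarrow> continuations a b 0 = {[]}"
  by (auto simp: continuations_def)

lemma snoc_in_continuations_iff:
  "zs @ [c] \<in> continuations a b (Suc L) \<longleftrightarrow> zs \<in> continuations a b L \<and> c \<in> extensions a b zs"
  using edge_in_V by (auto simp: continuations_def extensions_def nonbacktracking_Cons_Cons_snoc)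

lemma sum_continuations_Suc:
  "(\<Sum>zs\<in>continuations a b (Suc L). g zs) = (\<Sum>zs\<in>continuations a b L. \<Sum>c\<in>extensions a b zs. g (zs @ [c]))"
proof -
  have "continuations a b (Suc L) = (\<lambda>(zs, c). zs @ [c]) ` (SIGMA zs:continuations a b L. extensions a b zs)"
  proof (intro equalityI subsetI)
    fix ys assume ys: "ys \<in> continuations a b (Suc L)"
    then obtain zs c where "ys = zs @ [c]"
      by (cases ys rule: rev_cases) (auto simp: continuations_def)
    then show "ys \<in> (\<lambda>(zs, c). zs @ [c]) ` (SIGMA zs:continuations a b L. extensions a b zs)"
      using ys snoc_in_continuations_iff by force
  qed (auto simp: snoc_in_continuations_iff)
  moreover have "inj_on (\<lambda>(zs, c). zs @ [c]) (SIGMA zs:continuations a b L. extensions a b zs)"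
    by (auto simp: inj_on_def)
  moreover have "finite (extensions a b zs)" for zs
    using finite_V by (simp add: extensions_def)
  ultimately show ?thesis
    by (simp add: sum.reindex sum.Sigma[OF finite_continuations] split_def)
qed

lemma card_extensions:
  assumes "zs \<in> continuations a b L"
  shows "card (extensions a b zs) = d (last (b # zs)) - 1"
proof -
  have "E (last (butlast (a # b # zs))) (last (b # zs))"
    using assms nonbacktracking_last_arc[of E "a # b # zs"] by (simp add: continuations_def)
  then have "E (last (b # zs)) (last (butlast (a # b # zs)))" by (rule edge_sym)
  moreover have "extensions a b zs = {c \<in> V. E (last (b # zs)) c} - {last (butlast (a # b # zs))}"
    by (auto simp: extensions_def)
  ultimately show ?thesis using card_nbrs_remove by simp
qed

lemma path_weight_snoc: "path_weight b (zs @ [c]) = path_weight b zs / (real (d (last (b # zs))) - 1)"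
proof -
  have "butlast (b # zs @ [c]) = butlast (b # zs) @ [last (b # zs)]"
    by (simp add: butlast_append)
  then show ?thesis by (simp add: path_weight_def)
qed

lemma path_weight_pos:
  assumes "set (b # zs) \<subseteq> V"
  shows "0 < path_weight b zs"
  unfolding path_weight_def
proof (rule prod_list_map_pos)
  fix v assume "v \<in> set (butlast (b # zs))"
  then have "v \<in> V" by (rule subsetD[OF assms in_set_butlastD])
  then show "0 < 1 / (real (d v) - 1)" using min_deg[of v] by simp
qed

lemma nb_mean_0: "E a b \<Longrightarrow> nb_mean a b 0 h = h a b"
  by (simp add: nb_mean_def continuations_0 path_weight_def)

lemma nb_mean_Suc: "nb_mean a b (Suc L) h = nb_mean a b L (nb_transfer h)"
proof -
  have "nb_transfer h (last (butlast (a # b # zs))) (last (b # zs))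
      = (\<Sum>c\<in>extensions a b zs. h (last (b # zs)) c / (real (d (last (b # zs))) - 1))" for zs
    unfolding nb_transfer_def extensions_def using finite_V
    by (simp add: sum.inter_filter[symmetric] conj_commute)
  then show ?thesis
    unfolding nb_mean_def sum_continuations_Suc
    by (simp add: path_weight_snoc butlast_append sum_distrib_left)
qed

lemma sum_arcs_nb_mean: "(\<Sum>(a, b)\<in>arcs. nb_mean a b L h) = (\<Sum>(a, b)\<in>arcs. h a b)"
proof (induction L arbitrary: h)
  case 0
  then show ?case by (intro sum.cong) (auto simp: arcs_def nb_mean_0)
next
  case (Suc L)
  then show ?case by (simp add: nb_mean_Suc sum_arcs_nb_transfer)
qed

end

section \<open>Every arc ends a non-backtracking walk from the root\<close>

locale nb_closed_arcs = min_degree_two +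
  fixes R :: "('a \<times> 'a) set"
  assumes R_arcs: "(a, b) \<in> R \<Longrightarrow> E a b"
    and R_closed: "(a, b) \<in> R \<Longrightarrow> E b c \<Longrightarrow> c \<noteq> a \<Longrightarrow> (b, c) \<in> R"
begin

definition in_arcs :: "'a \<Rightarrow> 'a set" where "in_arcs b = {a \<in> V. (a, b) \<in> R}"
definition out_arcs :: "'a \<Rightarrow> 'a set" where "out_arcs b = {c \<in> V. (b, c) \<in> R}"

lemma in_arcs_subset: "in_arcs b \<subseteq> {a \<in> V. E b a}"
  using R_arcs edge_sym by (auto simp: in_arcs_def)

lemma out_arcs_subset: "out_arcs b \<subseteq> {c \<in> V. E b c}"
  using R_arcs by (auto simp: out_arcs_def)

lemma nbrs_subset_out_arcs:
  assumes "(a, b) \<in> R" shows "{c \<in> V. E b c} - {a} \<subseteq> out_arcs b"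
  using R_closed[OF assms] by (auto simp: out_arcs_def)

lemma card_in_arcs_le_out_arcs:
  assumes "b \<in> V" shows "card (in_arcs b) \<le> card (out_arcs b)"
proof (cases "in_arcs b = {}")
  case False
  then obtain a where a: "(a, b) \<in> R" "a \<in> in_arcs b" by (auto simp: in_arcs_def)
  have fin: "finite (out_arcs b)" "finite {c \<in> V. E b c}" using finite_V by (auto simp: out_arcs_def)
  show ?thesis
  proof (cases "in_arcs b \<subseteq> {a}")
    case True
    have "card (in_arcs b) \<le> 1" using card_mono[OF _ True] by simp
    also have "1 \<le> card ({c \<in> V. E b c} - {a})"
      using card_nbrs_remove[OF edge_sym[OF R_arcs[OF a(1)]]] min_deg[OF assms] by simp
    also have "\<dots> \<le> card (out_arcs b)" using fin(1) nbrs_subset_out_arcs[OF a(1)] by (rule card_mono)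
    finally show ?thesis .
  next
    case False
    then obtain a' where "(a', b) \<in> R" "a' \<noteq> a" by (auto simp: in_arcs_def)
    then have "{c \<in> V. E b c} \<subseteq> out_arcs b"
      using nbrs_subset_out_arcs[OF a(1)] nbrs_subset_out_arcs[of a' b] by auto
    then have "card {c \<in> V. E b c} \<le> card (out_arcs b)" by (rule card_mono[OF fin(1)])
    moreover have "card (in_arcs b) \<le> card {c \<in> V. E b c}"
      using fin(2) in_arcs_subset by (rule card_mono)
    ultimately show ?thesis by simp
  qed
qed simp

lemma card_in_arcs_eq_out_arcs:
  assumes "b \<in> V" shows "card (in_arcs b) = card (out_arcs b)"
proof -
  have sums: "(\<Sum>b\<in>V. card (in_arcs b)) = (\<Sum>b\<in>V. card (out_arcs b))"
  proof -
    have "(\<Sum>b\<in>V. card (in_arcs b)) = (\<Sum>b\<in>V. \<Sum>a\<in>V. if (a, b) \<in> R then 1 else 0)"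
      unfolding in_arcs_def using finite_V by (simp add: sum.inter_filter[symmetric])
    also have "\<dots> = (\<Sum>a\<in>V. \<Sum>b\<in>V. if (a, b) \<in> R then 1 else 0)" by (rule sum.swap)
    also have "\<dots> = (\<Sum>b\<in>V. card (out_arcs b))"
      unfolding out_arcs_def using finite_V by (simp add: sum.inter_filter[symmetric])
    finally show ?thesis .
  qed
  show ?thesis
  proof (rule ccontr)
    assume "card (in_arcs b) \<noteq> card (out_arcs b)"
    then have "card (in_arcs b) < card (out_arcs b)"
      using card_in_arcs_le_out_arcs[OF assms] by simp
    then have "(\<Sum>b\<in>V. card (in_arcs b)) < (\<Sum>b\<in>V. card (out_arcs b))"
      using assms card_in_arcs_le_out_arcs by (intro sum_strict_mono_ex1[OF finite_V]) auto
    then show False using sums by simp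
  qed
qed

definition saturated :: "'a \<Rightarrow> bool" where
  "saturated u \<longleftrightarrow> (\<forall>v. E u v \<longrightarrow> (u, v) \<in> R \<and> (v, u) \<in> R)"

lemma saturated_if_out_arcs:
  assumes "u \<in> V" "{v \<in> V. E u v} \<subseteq> out_arcs u"
  shows "saturated u"
proof -
  have out: "out_arcs u = {v \<in> V. E u v}" using assms(2) out_arcs_subset by blast
  then have "card (in_arcs u) = card {v \<in> V. E u v}" using card_in_arcs_eq_out_arcs[OF assms(1)] by simp
  then have "in_arcs u = {v \<in> V. E u v}"
    using in_arcs_subset finite_V by (intro card_subset_eq) auto
  then show ?thesis using out edge_in_V unfolding saturated_def in_arcs_def out_arcs_def by blast
qed

lemma saturated_step:
  assumes "saturated u" "E u v" shows "saturated v"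
proof (rule saturated_if_out_arcs)
  show "v \<in> V" using assms(2) edge_in_V by blast
  have "(u, v) \<in> R" "(v, u) \<in> R" using assms by (auto simp: saturated_def)
  then show "{c \<in> V. E v c} \<subseteq> out_arcs v"
    using nbrs_subset_out_arcs[of u v] by (auto simp: out_arcs_def)
qed

text \<open>Minimum degree two makes in-degree at most out-degree at every vertex, and the totals agree,
  so the two agree everywhere; a vertex whose out-arcs all lie in R therefore has all its arcs in R,
  and this propagates along the edges of a connected graph.\<close>
lemma all_arcs_in_R:
  assumes "connected_graph V E" "v0 \<in> V" "\<And>v. E v0 v \<Longrightarrow> (v0, v) \<in> R" "E a b"
  shows "(a, b) \<in> R"
proof -
  have "a \<in> V" using assms(4) edge_in_V by blast
  then have "(v0, a) \<in> {(x, y). E x y}\<^sup>*"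
    using assms(1,2) by (simp add: connected_graph_def)
  then have "saturated a"
  proof (induction rule: rtrancl_induct)
    case base
    show ?case using assms(2,3) by (intro saturated_if_out_arcs) (auto simp: out_arcs_def)
  next
    case (step x y)
    then show ?case using saturated_step by blast
  qed
  then show ?thesis using assms(4) by (simp add: saturated_def)
qed

end

section \<open>Test vectors\<close>

lemma exists_le_of_sum_le:
  fixes f g :: "'b \<Rightarrow> real"
  assumes "finite D" "D \<noteq> {}" "(\<Sum>p\<in>D. g p) \<le> (\<Sum>p\<in>D. f p)"
  shows "\<exists>p\<in>D. g p \<le> f p"
  using sum_strict_mono[of D f g] assms by force

locale cover_lower_bound = universal_cover + min_degree_two +
  assumes connected: "connected_graph V E"
begin

lemma exists_walk_with_last_arc:
  assumes "E a b"
  shows "\<exists>x\<in>walks. 2 \<le> length x \<and> last (butlast x) = a \<and> last x = b"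
proof -
  define R where "R = {(a, b). \<exists>x\<in>walks. 2 \<le> length x \<and> last (butlast x) = a \<and> last x = b}"
  interpret nb_closed_arcs V E R
  proof
    fix a b c assume "(a, b) \<in> R"
    then obtain x where x: "x \<in> walks" "2 \<le> length x" "last (butlast x) = a" "last x = b"
      by (auto simp: R_def)
    then show "E a b" using nonbacktracking_last_arc[of E x] by (auto simp: ucover_eq)
    assume "E b c" "c \<noteq> a"
    then have "x @ [c] \<in> walks" using x snoc_in_walks_iff by auto
    then show "(b, c) \<in> R" using x unfolding R_def by (intro CollectI case_prodI bexI[of _ "x @ [c]"]) auto
  qed
  have "(v0, v) \<in> R" if "E v0 v" for v
  proof -
    have "[v0, v] \<in> walks" using that by (simp add: ucover_eq)
    then show ?thesis unfolding R_def by (intro CollectI case_prodI bexI[of _ "[v0, v]"]) simp_all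
  qed
  then show ?thesis using all_arcs_in_R[OF connected root _ assms] by (auto simp: R_def)
qed

definition base_walk :: "'a \<Rightarrow> 'a \<Rightarrow> 'a list" where
  "base_walk a b = (SOME x. x \<in> walks \<and> 2 \<le> length x \<and> last (butlast x) = a \<and> last x = b)"

lemma base_walk:
  assumes "E a b"
  shows "base_walk a b \<in> walks" "2 \<le> length (base_walk a b)"
    "last (butlast (base_walk a b)) = a" "last (base_walk a b) = b"
  using someI_ex[OF exists_walk_with_last_arc[OF assms, unfolded Bex_def]]
  by (simp_all add: base_walk_def)

lemma append_base_walk_in_walks_iff:
  assumes "E a b"
  shows "base_walk a b @ zs \<in> walks \<longleftrightarrow> nonbacktracking E (a # b # zs)"
proof -
  have "nonbacktracking E (base_walk a b @ zs) \<longleftrightarrow> nonbacktracking E (base_walk a b) \<and> nonbacktracking E (a # b # zs)"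
    using base_walk[OF assms] by (intro nonbacktracking_append_iff) auto
  moreover have "base_walk a b \<noteq> []" using base_walk(2)[OF assms] by auto
  ultimately show ?thesis using base_walk(1)[OF assms] by (auto simp: ucover_eq)
qed

lemma last_append_base_walk:
  assumes "E a b"
  shows "last (base_walk a b @ zs) = last (b # zs)"
    "last (butlast (base_walk a b @ zs)) = last (butlast (a # b # zs))"
proof -
  have "base_walk a b \<noteq> []" using base_walk(2)[OF assms] by auto
  then show "last (base_walk a b @ zs) = last (b # zs)"
    using base_walk(4)[OF assms] by (cases "zs = []") auto
  show "last (butlast (base_walk a b @ zs)) = last (butlast (a # b # zs))"
    using base_walk[OF assms] \<open>base_walk a b \<noteq> []\<close> by (cases "zs = []") (auto simp: butlast_append)
qed

definition short_continuations :: "'a \<Rightarrow> 'a \<Rightarrow> nat \<Rightarrow> 'a list set" where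
  "short_continuations a b n = {zs. length zs \<le> n \<and> nonbacktracking E (a # b # zs)}"

lemma short_continuations_eq_UN: "short_continuations a b n = (\<Union>L\<le>n. continuations a b L)"
  by (auto simp: short_continuations_def continuations_def)

lemma finite_short_continuations: "finite (short_continuations a b n)"
  unfolding short_continuations_eq_UN by (intro finite_UN_I finite_atMost finite_continuations)

lemma sum_short_continuations:
  "(\<Sum>zs\<in>short_continuations a b n. g zs) = (\<Sum>L\<le>n. \<Sum>zs\<in>continuations a b L. g zs)"
  unfolding short_continuations_eq_UN
  by (rule sum.UNION_disjoint) (simp_all add: finite_continuations, auto simp: continuations_def)

definition amplitude :: "'a \<Rightarrow> 'a list \<Rightarrow> real" where
  "amplitude b zs = sqrt (path_weight b zs * real (d (last (b # zs))))"

lemma amplitude_sq_pos: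
  assumes "zs \<in> continuations a b L"
  shows "(amplitude b zs)\<^sup>2 = path_weight b zs * real (d (last (b # zs)))" "0 < amplitude b zs"
proof -
  have "set (a # b # zs) \<subseteq> V" using set_continuation[OF assms] .
  then have "0 < path_weight b zs" "2 \<le> d (last (b # zs))"
    using path_weight_pos min_deg[of "last (b # zs)"] last_in_set[of "b # zs"] by auto
  then show "(amplitude b zs)\<^sup>2 = path_weight b zs * real (d (last (b # zs)))" "0 < amplitude b zs"
    by (auto simp: amplitude_def)
qed

lemma amplitude_extension:
  assumes zs: "zs \<in> continuations a b L" and c: "c \<in> extensions a b zs"
  shows "amplitude b zs * (w (last (b # zs)) c * amplitude b (zs @ [c]))
    = path_weight b zs / sqrt (real (d (last (b # zs))) - 1)"
proof -
  define P where "P = path_weight b zs"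
  define q where "q = real (d (last (b # zs)))"
  define r where "r = real (d c)"
  have "set (a # b # zs) \<subseteq> V" using set_continuation[OF zs] .
  then have "0 < P" "2 \<le> q" "2 \<le> r"
    using c path_weight_pos min_deg[of "last (b # zs)"] min_deg[of c] last_in_set[of "b # zs"]
    by (auto simp: P_def q_def r_def extensions_def)
  then have "sqrt (P * q) * (1 / sqrt (q * r) * sqrt (P / (q - 1) * r))
      = (sqrt P * sqrt P) * (sqrt q * sqrt r) / (sqrt q * sqrt r * sqrt (q - 1))"
    by (simp add: real_sqrt_mult real_sqrt_divide)
  also have "\<dots> = P / sqrt (q - 1)" using \<open>0 < P\<close> \<open>2 \<le> q\<close> \<open>2 \<le> r\<close> by (simp add: field_simps)
  finally show ?thesis
    by (simp add: amplitude_def w0_def path_weight_snoc P_def q_def r_def)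
qed

definition test_fn :: "'a \<Rightarrow> 'a \<Rightarrow> nat \<Rightarrow> 'a list \<Rightarrow> real" where
  "test_fn a b n y = (if y \<in> (\<lambda>zs. base_walk a b @ zs) ` short_continuations a b n
     then amplitude b (drop (length (base_walk a b)) y) else 0)"

lemma test_fn_append:
  "test_fn a b n (base_walk a b @ zs) = (if zs \<in> short_continuations a b n then amplitude b zs else 0)"
  by (auto simp: test_fn_def)

lemma supp_test_fn: "supp_fun (test_fn a b n) = (\<lambda>zs. base_walk a b @ zs) ` short_continuations a b n"
proof -
  have "amplitude b zs \<noteq> 0" if "zs \<in> short_continuations a b n" for zs
    using that amplitude_sq_pos(2)[of zs a b "length zs"]
    by (auto simp: short_continuations_def continuations_def)
  then show ?thesis by (auto simp: supp_fun_def test_fn_def)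
qed

lemma test_fn_in_finsupp_vecs:
  assumes "E a b" shows "test_fn a b n \<in> finsupp_vecs walks"
proof -
  have "[] \<in> short_continuations a b n" using assms by (simp add: short_continuations_def)
  then have "supp_fun (test_fn a b n) \<noteq> {}" by (auto simp: supp_test_fn)
  moreover have "supp_fun (test_fn a b n) \<subseteq> walks"
    using append_base_walk_in_walks_iff[OF assms] by (auto simp: supp_test_fn short_continuations_def)
  ultimately show ?thesis
    using finite_short_continuations by (simp add: finsupp_vecs_def supp_test_fn)
qed

lemma sum_supp_test_fn:
  "(\<Sum>y\<in>supp_fun (test_fn a b n). g y) = (\<Sum>L\<le>n. \<Sum>zs\<in>continuations a b L. g (base_walk a b @ zs))"
  unfolding supp_test_fn sum_short_continuations[symmetric]
  by (rule sum.reindex[unfolded comp_def]) (simp add: inj_on_def)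

lemma test_fn_norm_sq:
  "(\<Sum>y\<in>supp_fun (test_fn a b n). (test_fn a b n y)\<^sup>2) = (\<Sum>L\<le>n. nb_mean a b L (\<lambda>_ q. real (d q)))"
  unfolding sum_supp_test_fn nb_mean_def
  by (intro sum.cong refl) (auto simp: test_fn_append amplitude_sq_pos short_continuations_def continuations_def)


lemma extensions_eq:
  assumes "E a b" "zs \<in> continuations a b L"
  shows "{c. base_walk a b @ zs @ [c] \<in> walks} = extensions a b zs"
proof -
  have "base_walk a b @ zs \<in> walks"
    using assms append_base_walk_in_walks_iff by (simp add: continuations_def)
  then show ?thesis
    using base_walk(2)[OF assms(1)] last_append_base_walk[OF assms(1)] edge_in_V
    by (auto simp: snoc_in_walks_iff[where x="base_walk a b @ zs", simplified] extensions_def)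
qed

lemma cover_op_test_fn:
  assumes ab: "E a b" and zs: "zs \<in> continuations a b L" and "L \<le> n"
  shows "A (test_fn a b n) (base_walk a b @ zs) =
      (if L < n then \<Sum>c\<in>extensions a b zs. w (last (b # zs)) c * amplitude b (zs @ [c]) else 0)
    + (if L = 0 then 0 else w (last (b # zs)) (last (butlast (a # b # zs))) * amplitude b (butlast zs))"
proof -
  let ?x = "base_walk a b @ zs"
  have x: "?x \<in> walks" "2 \<le> length ?x"
    using zs append_base_walk_in_walks_iff[OF ab] base_walk(2)[OF ab] by (auto simp: continuations_def)
  have children: "test_fn a b n (?x @ [c]) = (if L < n then amplitude b (zs @ [c]) else 0)"
    if "c \<in> extensions a b zs" for c
    using that zs snoc_in_continuations_iff[of zs c a b L] test_fn_append[of a b n "zs @ [c]"]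
    by (auto simp: short_continuations_def continuations_def)
  have parent: "test_fn a b n (butlast ?x) = (if L = 0 then 0 else amplitude b (butlast zs))"
  proof (cases "L = 0")
    case True
    then have "butlast ?x \<notin> (\<lambda>zs. base_walk a b @ zs) ` short_continuations a b n"
      using zs base_walk(2)[OF ab] by (auto simp: continuations_def dest: arg_cong[of _ _ length])
    then show ?thesis using True by (simp add: test_fn_def)
  next
    case False
    then have "zs \<noteq> []" using zs by (auto simp: continuations_def)
    then have "zs = butlast zs @ [last zs]" by simp
    then have "nonbacktracking E (a # b # butlast zs)"
      using zs nonbacktracking_appendD[of E "a # b # butlast zs" "[last zs]"] by (simp add: continuations_def)
    then show ?thesis
      using False \<open>zs \<noteq> []\<close> zs \<open>L \<le> n\<close> test_fn_append[of a b n "butlast zs"]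
      by (auto simp: butlast_append short_continuations_def continuations_def)
  qed
  have "A (test_fn a b n) ?x = (\<Sum>c\<in>extensions a b zs. w (last ?x) c * test_fn a b n (?x @ [c]))
      + w (last ?x) (last (butlast ?x)) * test_fn a b n (butlast ?x)"
    using cover_op_children_parent[OF x] extensions_eq[OF ab zs] by simp
  also have "(\<Sum>c\<in>extensions a b zs. w (last ?x) c * test_fn a b n (?x @ [c]))
      = (if L < n then \<Sum>c\<in>extensions a b zs. w (last (b # zs)) c * amplitude b (zs @ [c]) else 0)"
    using children last_append_base_walk(1)[OF ab] by (cases "L < n") (simp_all cong: sum.cong)
  also have "w (last ?x) (last (butlast ?x)) * test_fn a b n (butlast ?x)
      = (if L = 0 then 0 else w (last (b # zs)) (last (butlast (a # b # zs))) * amplitude b (butlast zs))"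
    using parent last_append_base_walk[OF ab] by simp
  finally show ?thesis .
qed

lemma sum_extensions_amplitude:
  assumes zs: "zs \<in> continuations a b L"
  shows "(\<Sum>c\<in>extensions a b zs. amplitude b zs * (w (last (b # zs)) c * amplitude b (zs @ [c])))
    = path_weight b zs * sqrt (real (d (last (b # zs))) - 1)"
proof -
  let ?q = "real (d (last (b # zs)))"
  have "2 \<le> ?q"
    using set_continuation[OF zs] min_deg[of "last (b # zs)"] last_in_set[of "b # zs"] by auto
  have "(\<Sum>c\<in>extensions a b zs. amplitude b zs * (w (last (b # zs)) c * amplitude b (zs @ [c])))
      = real (d (last (b # zs)) - 1) * (path_weight b zs / sqrt (?q - 1))"
    using amplitude_extension[OF zs] card_extensions[OF zs] by simp
  also have "\<dots> = path_weight b zs * sqrt (?q - 1)"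
    using \<open>2 \<le> ?q\<close> by (simp add: of_nat_diff field_simps real_sqrt_mult[symmetric])
  finally show ?thesis .
qed

text \<open>Each edge of the subtree is counted once from the child and once from the parent.\<close>
lemma test_fn_Rayleigh_numerator:
  assumes ab: "E a b"
  shows "(\<Sum>y\<in>supp_fun (test_fn a b n). test_fn a b n y * A (test_fn a b n) y)
    = 2 * (\<Sum>L<n. nb_mean a b L (\<lambda>_ q. sqrt (real (d q) - 1)))"
proof -
  define down where "down L = (\<Sum>zs\<in>continuations a b L. \<Sum>c\<in>extensions a b zs.
      amplitude b zs * (w (last (b # zs)) c * amplitude b (zs @ [c])))" for L
  define up where "up L = (\<Sum>zs\<in>continuations a b L.
      amplitude b zs * (w (last (b # zs)) (last (butlast (a # b # zs))) * amplitude b (butlast zs)))" for L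
  have up_Suc: "up (Suc L) = down L" for L
    unfolding up_def down_def sum_continuations_Suc
    by (intro sum.cong refl) (simp add: butlast_append w0_commute)
  have down_eq: "down L = nb_mean a b L (\<lambda>_ q. sqrt (real (d q) - 1))" for L
    unfolding down_def nb_mean_def by (intro sum.cong refl) (rule sum_extensions_amplitude)
  have "(\<Sum>y\<in>supp_fun (test_fn a b n). test_fn a b n y * A (test_fn a b n) y)
      = (\<Sum>L\<le>n. (if L < n then down L else 0) + (if L = 0 then 0 else up L))"
    unfolding sum_supp_test_fn down_def up_def
    by (intro sum.cong refl)
      (auto simp: cover_op_test_fn[OF ab] test_fn_append short_continuations_def continuations_def
        sum_distrib_left distrib_left sum.distrib intro!: sum.cong)
  also have "\<dots> = (\<Sum>L<Suc n. if L < n then down L else 0) + (\<Sum>L<Suc n. if L = 0 then 0 else up L)"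
    by (simp add: sum.distrib lessThan_Suc_atMost)
  also have "\<dots> = (\<Sum>L<n. down L) + (\<Sum>L<n. up (Suc L))"
    using sum.lessThan_Suc_shift[of "\<lambda>L. if L = 0 then 0 else up L" n] by simp
  also have "\<dots> = 2 * (\<Sum>L<n. nb_mean a b L (\<lambda>_ q. sqrt (real (d q) - 1)))"
    by (simp add: up_Suc down_eq)
  finally show ?thesis .
qed

lemma sum_arcs_Rayleigh_numerator:
  "(\<Sum>(a, b)\<in>arcs. \<Sum>y\<in>supp_fun (test_fn a b n). test_fn a b n y * A (test_fn a b n) y)
    = 2 * real n * (\<Sum>u\<in>V. real (d u) * sqrt (real (d u) - 1))"
proof -
  have "(\<Sum>(a, b)\<in>arcs. \<Sum>y\<in>supp_fun (test_fn a b n). test_fn a b n y * A (test_fn a b n) y)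
      = (\<Sum>(a, b)\<in>arcs. 2 * (\<Sum>L<n. nb_mean a b L (\<lambda>_ q. sqrt (real (d q) - 1))))"
    by (intro sum.cong refl) (auto simp: arcs_def test_fn_Rayleigh_numerator)
  also have "\<dots> = 2 * (\<Sum>L<n. \<Sum>(a, b)\<in>arcs. nb_mean a b L (\<lambda>_ q. sqrt (real (d q) - 1)))"
    by (simp add: sum_distrib_left split_def sum.swap[of _ arcs])
  also have "\<dots> = 2 * real n * (\<Sum>u\<in>V. real (d u) * sqrt (real (d u) - 1))"
    by (simp add: sum_arcs_nb_mean sum_arcs_snd)
  finally show ?thesis .
qed

lemma sum_arcs_test_fn_norm_sq:
  "(\<Sum>(a, b)\<in>arcs. \<Sum>y\<in>supp_fun (test_fn a b n). (test_fn a b n y)\<^sup>2)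
    = real (Suc n) * (\<Sum>u\<in>V. (real (d u))\<^sup>2)"
proof -
  have "(\<Sum>(a, b)\<in>arcs. \<Sum>y\<in>supp_fun (test_fn a b n). (test_fn a b n y)\<^sup>2)
      = (\<Sum>L\<le>n. \<Sum>(a, b)\<in>arcs. nb_mean a b L (\<lambda>_ q. real (d q)))"
    by (simp add: test_fn_norm_sq split_def sum.swap[of _ arcs])
  also have "\<dots> = real (Suc n) * (\<Sum>u\<in>V. (real (d u))\<^sup>2)"
    by (simp add: sum_arcs_nb_mean sum_arcs_snd power2_eq_square)
  finally show ?thesis .
qed

lemma arcs_nonempty: "arcs \<noteq> {}"
proof -
  have "card {v \<in> V. E v0 v} \<noteq> 0" using min_deg[OF root] by (simp add: deg_def)
  then show ?thesis by (auto simp: arcs_def card_eq_0_iff)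
qed

lemma truncated_bound_le_cover_spectral_radius:
  fixes n :: nat
  defines "N \<equiv> \<Sum>u\<in>V. real (d u) * sqrt (real (d u) - 1)" and "D \<equiv> \<Sum>u\<in>V. (real (d u))\<^sup>2"
  shows "real n / real (Suc n) * (2 * N / D) \<le> cover_spectral_radius V E v0"
proof -
  define r where "r = real n / real (Suc n) * (2 * N / D)"
  define num where "num = (\<lambda>(a, b). \<Sum>y\<in>supp_fun (test_fn a b n). test_fn a b n y * A (test_fn a b n) y)"
  define den where "den = (\<lambda>(a, b). \<Sum>y\<in>supp_fun (test_fn a b n). (test_fn a b n y)\<^sup>2)"
  have "0 < (real (d v0))\<^sup>2" using min_deg[OF root] by simp
  then have "0 < D" unfolding D_def using finite_V root by (intro sum_pos2) auto
  moreover have "0 \<le> N"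
    unfolding N_def by (intro sum_nonneg) (use min_deg in \<open>fastforce simp: of_nat_le_iff[symmetric]\<close>)
  ultimately have "0 \<le> r" by (simp add: r_def)
  have "(\<Sum>p\<in>arcs. r * den p) = r * (real (Suc n) * D)"
    by (simp only: sum_distrib_left[symmetric] den_def sum_arcs_test_fn_norm_sq D_def)
  also have "\<dots> = 2 * real n * N"
    using \<open>0 < D\<close> by (simp add: r_def field_simps del: of_nat_Suc)
  also have "\<dots> = (\<Sum>p\<in>arcs. num p)"
    by (simp only: num_def sum_arcs_Rayleigh_numerator N_def)
  finally have "(\<Sum>p\<in>arcs. r * den p) \<le> (\<Sum>p\<in>arcs. num p)" by simp
  then obtain p where "p \<in> arcs" "r * den p \<le> num p"
    using exists_le_of_sum_le[OF finite_arcs arcs_nonempty] by blast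
  then obtain a b where "E a b" "r * den (a, b) \<le> num (a, b)" by (cases p) (auto simp: arcs_def)
  then show ?thesis
    using cover_spectral_radius_ge[OF test_fn_in_finsupp_vecs \<open>0 \<le> r\<close>]
    by (simp add: r_def num_def den_def)
qed

end

theorem corollary3p2:
  fixes V :: "'a set" and E :: "'a \<Rightarrow> 'a \<Rightarrow> bool" and v0 :: 'a
  assumes "simple_graph V E"
    and "connected_graph V E"
    and "\<forall>u\<in>V. deg V E u \<ge> 2"
    and "v0 \<in> V"
  shows "cover_spectral_radius V E v0 \<ge>
    2 * (\<Sum>u\<in>V. real (deg V E u) * sqrt (real (deg V E u) - 1)) / (\<Sum>u\<in>V. (real (deg V E u))\<^sup>2)"
proof -
  interpret cover_lower_bound V E v0
    using assms by unfold_locales auto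
  let ?bound = "2 * (\<Sum>u\<in>V. real (deg V E u) * sqrt (real (deg V E u) - 1)) / (\<Sum>u\<in>V. (real (deg V E u))\<^sup>2)"
  have "(\<lambda>n. real n / real (Suc n) * ?bound) \<longlonglongrightarrow> 1 * ?bound"
    by (intro tendsto_mult_right LIMSEQ_n_over_Suc_n)
  then show ?thesis
    using truncated_bound_le_cover_spectral_radius by (intro LIMSEQ_le_const2) auto
qed

end
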